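(* Let $u_{tm}=0110100110010110\cdots$ be the Thue–Morse word and $a_{tm}=\tfrac12,1,\tfrac34,\tfrac14,\ldots$ the canonical representative of its valid permutation. (i) The valid permutation of the word $0\,u'$, where $u'=1221211221121221\cdots$ is the Thue–Morse word written over the alphabet $\{1,2\}$ (with $1<2$), is ergodic, with canonical representative $0,\tfrac12,1,\tfrac34,\tfrac14,\ldots$ (that is, $0$ followed by $a_{tm}$). (ii) The valid permutation of the word $2\,u_{tm}=20110100110010110\cdots$ is not ergodic.
   Context: For an aperiodic infinite word $u$ over $\{0,\ldots,q-1\}$, the valid permutation $\alpha_u$ is the infinite permutation with $\alpha_u[i]<\alpha_u[j]$ iff the shift $T^iu=u[i]u[i+1]\cdots$ is lexicographically smaller than $T^ju$. An infinite permutation is an equivalence class of real sequences with pairwise distinct elements under $(a[n])\sim(b[n])$ iff $a[i]<a[j]\Leftrightarrow b[i]<b[j]$ for all $i,j$. A real sequence $(a[i])_{i\ge0}$ is canonical if its elements are pairwise distinct, lie in $[0,1]$, and for every $t\in[0,1]$, $\#\{0\le k<n: a[j+k]<t\}/n\to t$ as $n\to\infty$ uniformly in $j$; a permutation is ergodic if it has a canonical representative. The sequence $a_{tm}$ is the fixed point starting with $\tfrac12$ of the morphism $x\mapsto(\tfrac x2+\tfrac14,\tfrac x2+\tfrac34)$ for $0\le x\le\tfrac12$, $x\mapsto(\tfrac x2+\tfrac14,\tfrac x2-\tfrac14)$ for $\tfrac12<x\le1$. *)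

theory Defs
  imports Complex_Main
begin

function tm :: "nat \<Rightarrow> nat" where
  "tm n = (if n = 0 then 0 else if even n then tm (n div 2) else 1 - tm (n div 2))"
  by auto
termination by (relation "measure id") auto

declare tm.simps[simp del]

definition shift :: "nat \<Rightarrow> (nat \<Rightarrow> nat) \<Rightarrow> (nat \<Rightarrow> nat)" where
  "shift i u = (\<lambda>k. u (i + k))"

definition lex_less :: "(nat \<Rightarrow> nat) \<Rightarrow> (nat \<Rightarrow> nat) \<Rightarrow> bool" where
  "lex_less u v \<longleftrightarrow> (\<exists>n. (\<forall>k<n. u k = v k) \<and> u n < v n)"

definition represents_valid_perm :: "(nat \<Rightarrow> nat) \<Rightarrow> (nat \<Rightarrow> real) \<Rightarrow> bool" where
  "represents_valid_perm u a \<longleftrightarrow>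
     inj a \<and> (\<forall>i j. a i < a j \<longleftrightarrow> lex_less (shift i u) (shift j u))"

definition canonical :: "(nat \<Rightarrow> real) \<Rightarrow> bool" where
  "canonical a \<longleftrightarrow> inj a \<and> (\<forall>i. 0 \<le> a i \<and> a i \<le> 1) \<and>
     (\<forall>t\<in>{0..1}. \<forall>\<epsilon>>0. \<exists>N. \<forall>n\<ge>N. \<forall>j.
        \<bar>real (card {k. k < n \<and> a (j + k) < t}) / real n - t\<bar> < \<epsilon>)"

definition ergodic_valid_perm :: "(nat \<Rightarrow> nat) \<Rightarrow> bool" where
  "ergodic_valid_perm u \<longleftrightarrow> (\<exists>a. canonical a \<and> represents_valid_perm u a)"

text \<open>a_tm: fixed point starting with 1/2 of the morphism
  x \<mapsto> (x/2+1/4, x/2+3/4) for x \<le> 1/2, x \<mapsto> (x/2+1/4, x/2-1/4) for x > 1/2,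
  i.e. a(0)=1/2, a(2i) = first component of image of a(i), a(2i+1) = second component.\<close>
function atm :: "nat \<Rightarrow> real" where
  "atm n = (if n = 0 then 1/2 else
     (let x = atm (n div 2) in
        if even n then x/2 + 1/4
        else if x \<le> 1/2 then x/2 + 3/4 else x/2 - 1/4))"
  by auto
termination by (relation "measure id") auto

declare atm.simps[simp del]

end

theory Submission
  imports Defs
begin

text \<open>
  For the Thue--Morse morphism \<mu> (0 \<mapsto> 01, 1 \<mapsto> 10) one has T^(2n) u = \<mu>(T^n u) and
  T^(2n+1) u = T \<mu>(T^n u). Comparing two such images lexicographically reduces to comparing
  T^n u with T^m u, just as the two affine branches of the morphism defining a_tm compare
  a_tm[n] with a_tm[m]; shifts of different parity are separated within four letters, because
  u_tm contains neither 000 nor 111. Hence a_tm represents the valid permutation of u_tm.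

  Both branches have slope 1/2, so on each aligned block of length 2^m the values of a_tm form a
  translate of the grid 2^-m \<int> inside (0, 1]. Every window of length n therefore contains the
  proportion t of values below t up to an error O(n/2^m + 2^m), and a_tm is canonical.
  Prepending a new least letter to the word and the value 0 to the sequence preserves both
  properties, which gives (i).

  In 2 u_tm the shift at position 0 is the largest and the one at position 2, namely T u_tm,
  where a_tm attains its maximum 1, is the second largest. A representative a would thus have
  all but two values below a[2] < a[0] \<le> 1, while a canonical sequence has infinitely many
  values above any level below 1.
\<close>

section \<open>Prepending a letter; lexicographic order\<close>

definition prepend :: "'a \<Rightarrow> (nat \<Rightarrow> 'a) \<Rightarrow> nat \<Rightarrow> 'a" where
  "prepend x f n = (if n = 0 then x else f (n - 1))"

lemma prepend_0 [simp]: "prepend x f 0 = x"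
  and prepend_Suc [simp]: "prepend x f (Suc n) = f n"
  by (simp_all add: prepend_def)

lemma shift_Suc_prepend [simp]: "shift (Suc i) (prepend x f) = shift i f"
  by (simp add: shift_def fun_eq_iff)

lemma shift_apply_0 [simp]: "shift n u 0 = u n"
  by (simp add: shift_def)

lemma shift_0 [simp]: "shift 0 u = u"
  by (simp add: shift_def fun_eq_iff)

lemma shift_shift: "shift i (shift j u) = shift (j + i) u"
  by (simp add: shift_def fun_eq_iff add.assoc)

lemma shift_comp: "shift i (f \<circ> u) = f \<circ> shift i u"
  by (simp add: shift_def fun_eq_iff)

lemma prepend_shift_1: "prepend (u 0) (shift 1 u) = u"
  by (simp add: prepend_def shift_def fun_eq_iff)

lemma inj_prepend:
  assumes "inj a" "x \<notin> range a" shows "inj (prepend x a)"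
proof (rule injI)
  fix i j assume "prepend x a i = prepend x a j"
  then show "i = j" using assms by (cases i; cases j) (auto simp: inj_eq)
qed

lemma lex_lessI: "(\<And>k. k < n \<Longrightarrow> u k = v k) \<Longrightarrow> u n < v n \<Longrightarrow> lex_less u v"
  unfolding lex_less_def by blast

lemma lex_less_irrefl: "\<not> lex_less u u"
  by (auto simp: lex_less_def)

lemma lex_less_asym:
  assumes "lex_less u v" shows "\<not> lex_less v u"
proof
  assume "lex_less v u"
  then obtain m where m: "\<forall>k<m. v k = u k" "v m < u m" by (auto simp: lex_less_def)
  obtain n where n: "\<forall>k<n. u k = v k" "u n < v n" using assms by (auto simp: lex_less_def)
  show False
    by (cases m n rule: linorder_cases) (use m n in force)+
qed

lemma lex_less_head: "u 0 \<noteq> v 0 \<Longrightarrow> lex_less u v \<longleftrightarrow> u 0 < v 0"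
  unfolding lex_less_def by (metis less_nat_zero_code linorder_neqE_nat not_less_zero)

lemma lex_less_prepend:
  "lex_less (prepend a u) (prepend b v) \<longleftrightarrow> a < b \<or> (a = b \<and> lex_less u v)"
proof
  assume "lex_less (prepend a u) (prepend b v)"
  then obtain n where n: "\<forall>k<n. prepend a u k = prepend b v k" "prepend a u n < prepend b v n"
    by (auto simp: lex_less_def)
  show "a < b \<or> (a = b \<and> lex_less u v)"
  proof (cases n)
    case 0 then show ?thesis using n by simp
  next
    case (Suc n')
    then have "a = b" "\<forall>k<n'. u k = v k" "u n' < v n'" using n by force+
    then show ?thesis by (auto simp: lex_less_def)
  qed
next
  assume "a < b \<or> (a = b \<and> lex_less u v)"
  then show "lex_less (prepend a u) (prepend b v)"
  proof
    assume "a < b" then show ?thesis by (intro lex_lessI[of 0]) auto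
  next
    assume "a = b \<and> lex_less u v"
    then obtain n where "a = b" "\<forall>k<n. u k = v k" "u n < v n" by (auto simp: lex_less_def)
    then show ?thesis by (intro lex_lessI[of "Suc n"]) (auto simp: less_Suc_eq_0_disj)
  qed
qed

lemma lex_less_comp_strict_mono:
  assumes "strict_mono (f :: nat \<Rightarrow> nat)"
  shows "lex_less (f \<circ> u) (f \<circ> v) \<longleftrightarrow> lex_less u v"
  using strict_mono_less[OF assms] strict_mono_eq[OF assms] by (simp add: lex_less_def)

lemma lex_less_complement:
  assumes "\<And>k. u k \<le> 1" "\<And>k. v k \<le> 1"
  shows "lex_less (\<lambda>k. 1 - u k) (\<lambda>k. 1 - v k) \<longleftrightarrow> lex_less v u"
proof -
  have "(1 - u k = 1 - v k) = (v k = u k)" "(1 - u k < 1 - v k) = (v k < u k)" for k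
    using assms[of k] by auto
  then show ?thesis by (simp add: lex_less_def)
qed

section \<open>The Thue--Morse word and its morphism\<close>

lemma nat_even_odd_cases [case_names even odd]:
  fixes n :: nat obtains k where "n = 2 * k" | k where "n = Suc (2 * k)"
  by (cases "even n") (auto elim!: evenE oddE)

lemma tm_0 [simp]: "tm 0 = 0"
  by (simp add: tm.simps)

lemma tm_even [simp]: "tm (2 * n) = tm n"
  by (subst tm.simps) auto

lemma tm_odd [simp]: "tm (Suc (2 * n)) = 1 - tm n"
  by (subst tm.simps) auto

lemma tm_le_1: "tm n \<le> 1"
  by (induction n rule: less_induct) (subst tm.simps, auto)

lemma tm_eq_0_or_1: "tm n = 0 \<or> tm n = 1"
  using tm_le_1[of n] by auto

lemma tm_no_triple: "tm n = tm (n + 1) \<Longrightarrow> tm (n + 1) \<noteq> tm (n + 2)"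
proof (cases n rule: nat_even_odd_cases)
  case (even k)
  then show "tm n = tm (n + 1) \<Longrightarrow> tm (n + 1) \<noteq> tm (n + 2)"
    using tm_eq_0_or_1[of k] by auto
next
  case (odd k)
  then have "tm n = 1 - tm k" "tm (n + 1) = tm (k + 1)" "tm (n + 2) = 1 - tm (k + 1)"
    using tm_even[of "k + 1"] tm_odd[of "k + 1"] by simp_all
  then show "tm n = tm (n + 1) \<Longrightarrow> tm (n + 1) \<noteq> tm (n + 2)"
    using tm_eq_0_or_1[of "k + 1"] tm_eq_0_or_1[of k] by auto
qed

lemma shift_tm_le_1: "shift n tm k \<le> 1"
  using tm_le_1 by (simp add: shift_def)

text \<open>The Thue--Morse morphism \<open>0 \<mapsto> 01, 1 \<mapsto> 10\<close>, applied to binary words.\<close>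
definition tm_morphism :: "(nat \<Rightarrow> nat) \<Rightarrow> nat \<Rightarrow> nat" where
  "tm_morphism x k = (if even k then x (k div 2) else 1 - x (k div 2))"

lemma tm_morphism_even [simp]: "tm_morphism x (2 * k) = x k"
  and tm_morphism_odd [simp]: "tm_morphism x (Suc (2 * k)) = 1 - x k"
  by (simp_all add: tm_morphism_def)

lemma tm_morphism_0 [simp]: "tm_morphism x 0 = x 0"
  by (simp add: tm_morphism_def)

lemma tm_morphism_le_1: "(\<And>k. x k \<le> 1) \<Longrightarrow> tm_morphism x k \<le> 1"
  by (simp add: tm_morphism_def)

lemma tm_morphism_complement:
  "(\<And>k. x k \<le> 1) \<Longrightarrow> tm_morphism (\<lambda>k. 1 - x k) = (\<lambda>k. 1 - tm_morphism x k)"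
  by (auto simp: tm_morphism_def fun_eq_iff le_Suc_eq)

lemma shift_1_tm_morphism:
  "shift 1 (tm_morphism x) = prepend (1 - x 0) (tm_morphism (shift 1 x))"
proof
  fix k show "shift 1 (tm_morphism x) k = prepend (1 - x 0) (tm_morphism (shift 1 x)) k"
    by (cases k; cases "k - 1" rule: nat_even_odd_cases)
       (simp_all add: shift_def tm_morphism_def)
qed

lemma tm_morphism_unfold:
  "tm_morphism x = prepend (x 0) (prepend (1 - x 0) (tm_morphism (shift 1 x)))"
  using prepend_shift_1[of "tm_morphism x"] unfolding shift_1_tm_morphism by simp

lemma shift_even_tm: "shift (2 * n) tm = tm_morphism (shift n tm)"
proof
  fix k show "shift (2 * n) tm k = tm_morphism (shift n tm) k"
  proof (cases k rule: nat_even_odd_cases)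
    case (even l)
    then show ?thesis using tm_even[of "n + l"] by (simp add: shift_def distrib_left)
  next
    case (odd l)
    then show ?thesis using tm_odd[of "n + l"] by (simp add: shift_def distrib_left)
  qed
qed

lemma shift_odd_tm: "shift (Suc (2 * n)) tm = shift 1 (tm_morphism (shift n tm))"
proof -
  have "shift (Suc (2 * n)) tm = shift 1 (shift (2 * n) tm)" by (simp add: shift_shift)
  then show ?thesis by (simp add: shift_even_tm)
qed

lemma lex_less_tm_morphism:
  assumes "\<And>k. x k \<le> 1" "\<And>k. y k \<le> 1"
  shows "lex_less (tm_morphism x) (tm_morphism y) \<longleftrightarrow> lex_less x y"
proof
  assume "lex_less x y"
  then obtain n where n: "\<forall>k<n. x k = y k" "x n < y n" by (auto simp: lex_less_def)
  show "lex_less (tm_morphism x) (tm_morphism y)"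
  proof (rule lex_lessI[of "2 * n"])
    fix k assume "k < 2 * n"
    then show "tm_morphism x k = tm_morphism y k"
      using n(1) by (cases k rule: nat_even_odd_cases) auto
  qed (use n in simp)
next
  assume "lex_less (tm_morphism x) (tm_morphism y)"
  then obtain n where n: "\<forall>k<n. tm_morphism x k = tm_morphism y k"
    "tm_morphism x n < tm_morphism y n" by (auto simp: lex_less_def)
  show "lex_less x y"
  proof (cases n rule: nat_even_odd_cases)
    case (even l)
    have "x k = y k" if "k < l" for k
      using n(1)[rule_format, of "2 * k"] that even by simp
    then show ?thesis using n(2) even by (intro lex_lessI[of l]) auto
  next
    case (odd l)
    then have "x l = y l" using n(1)[rule_format, of "2 * l"] by simp
    then show ?thesis using n(2) odd by simp
  qed
qed

lemma lex_less_shift_1_tm_morphism: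
  assumes x: "\<And>k. x k \<le> 1" and y: "\<And>k. y k \<le> 1"
  shows "lex_less (shift 1 (tm_morphism x)) (shift 1 (tm_morphism y)) \<longleftrightarrow>
    y 0 < x 0 \<or> (x 0 = y 0 \<and> lex_less x y)"
proof -
  have "lex_less x y \<longleftrightarrow> lex_less (prepend (x 0) (shift 1 x)) (prepend (y 0) (shift 1 y))"
    by (simp only: prepend_shift_1)
  moreover have "\<And>k. shift 1 x k \<le> 1" "\<And>k. shift 1 y k \<le> 1"
    using x y by (simp_all add: shift_def)
  moreover have "1 - x 0 < 1 - y 0 \<longleftrightarrow> y 0 < x 0" "1 - x 0 = 1 - y 0 \<longleftrightarrow> x 0 = y 0"
    using x[of 0] y[of 0] by auto
  ultimately show ?thesis
    unfolding shift_1_tm_morphism lex_less_prepend by (auto simp: lex_less_tm_morphism)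
qed

lemma tm_morphism_lex_less_shift_1:
  assumes "\<And>k. x k \<le> 1" "y 0 = 0" "\<not> (y 1 = 0 \<and> y 2 = 0)"
  shows "lex_less (tm_morphism x) (shift 1 (tm_morphism y))"
proof -
  have "tm_morphism x = prepend (x 0) (prepend (1 - x 0) (prepend (x 1) (prepend (1 - x 1)
      (tm_morphism (shift 1 (shift 1 x))))))"
    using tm_morphism_unfold[of x] tm_morphism_unfold[of "shift 1 x"] by (simp add: shift_def)
  moreover have "shift 1 (tm_morphism y) = prepend 1 (prepend (y 1) (prepend (1 - y 1) (prepend (y 2)
      (shift 1 (tm_morphism (shift 1 (shift 1 y)))))))"
    using assms(2) tm_morphism_unfold[of "shift 1 y"] prepend_shift_1[of "tm_morphism (shift 1 (shift 1 y))"]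
    unfolding shift_1_tm_morphism by (simp add: shift_def numeral_2_eq_2)
  ultimately show ?thesis
    using assms(1)[of 0] assms(1)[of 1] assms(3) by (auto simp: lex_less_prepend)
qed

lemma shift_1_tm_morphism_lex_less:
  assumes x: "\<And>k. x k \<le> 1" and y: "\<And>k. y k \<le> 1"
    and "y 0 = 1" "\<not> (y 1 = 1 \<and> y 2 = 1)"
  shows "lex_less (shift 1 (tm_morphism y)) (tm_morphism x)"
proof -
  have "lex_less (tm_morphism (\<lambda>k. 1 - x k)) (shift 1 (tm_morphism (\<lambda>k. 1 - y k)))"
    using assms(3,4) y[of 1] y[of 2]
    by (intro tm_morphism_lex_less_shift_1) auto
  moreover have "shift 1 (\<lambda>k. 1 - tm_morphism y k) = (\<lambda>k. 1 - shift 1 (tm_morphism y) k)"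
    by (simp add: shift_def)
  ultimately have "lex_less (\<lambda>k. 1 - tm_morphism x k) (\<lambda>k. 1 - shift 1 (tm_morphism y) k)"
    unfolding tm_morphism_complement[OF x] tm_morphism_complement[OF y] by simp
  moreover have "\<And>k. shift 1 (tm_morphism y) k \<le> 1"
    using tm_morphism_le_1[OF y] by (simp add: shift_def)
  ultimately show ?thesis
    using lex_less_complement tm_morphism_le_1 x by blast
qed

section \<open>The order of the shifts of the Thue--Morse word\<close>

lemma atm_0 [simp]: "atm 0 = 1/2"
  by (simp add: atm.simps)

lemma atm_even: "atm (2 * n) = atm n / 2 + 1/4"
  by (subst atm.simps) (simp add: Let_def)

lemma atm_odd: "atm (Suc (2 * n)) = (if atm n \<le> 1/2 then atm n / 2 + 3/4 else atm n / 2 - 1/4)"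
  by (subst atm.simps) (simp add: Let_def)

lemma atm_1: "atm 1 = 1"
  using atm_odd[of 0] by simp

lemma atm_bounds: "0 < atm n \<and> atm n \<le> 1"
proof (induction n rule: less_induct)
  case (less n)
  show ?case
  proof (cases n rule: nat_even_odd_cases)
    case (even k)
    then show ?thesis
      using less[of k] atm_even[of k] by (cases "k = 0") auto
  next
    case (odd k)
    then show ?thesis using less[of k] atm_odd[of k] by auto
  qed
qed

lemma atm_le_half_iff: "atm n \<le> 1/2 \<longleftrightarrow> tm n = 0"
proof (induction n rule: less_induct)
  case (less n)
  show ?case
  proof (cases n rule: nat_even_odd_cases)
    case (even k)
    then show ?thesis
      using less[of k] atm_even[of k] atm_bounds[of k] by (cases "k = 0") auto
  next
    case (odd k)
    then show ?thesis
      using less[of k] atm_odd[of k] atm_bounds[of k] tm_eq_0_or_1[of k] by auto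
  qed
qed

lemma atm_even_bounds: "1/4 < atm (2 * n) \<and> atm (2 * n) \<le> 3/4"
  using atm_even[of n] atm_bounds[of n] by auto

lemma atm_odd_bounds:
  "tm n = 0 \<Longrightarrow> 3/4 < atm (Suc (2 * n))" "tm n = 1 \<Longrightarrow> atm (Suc (2 * n)) \<le> 1/4"
  using atm_odd[of n] atm_bounds[of n] atm_le_half_iff[of n] by auto

lemma atm_even_less_iff: "atm (2 * n) < atm (2 * m) \<longleftrightarrow> atm n < atm m"
  by (simp add: atm_even)

lemma atm_odd_less_iff:
  "atm (Suc (2 * n)) < atm (Suc (2 * m)) \<longleftrightarrow> tm m < tm n \<or> (tm n = tm m \<and> atm n < atm m)"
  using atm_odd[of n] atm_odd[of m] atm_le_half_iff[of n] atm_le_half_iff[of m]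
    atm_bounds[of n] atm_bounds[of m] tm_eq_0_or_1[of n] tm_eq_0_or_1[of m]
  by auto

lemma inj_atm: "inj atm"
proof -
  have "atm i = atm j \<Longrightarrow> i = j" for i j
  proof (induction "i + j" arbitrary: i j rule: less_induct)
    case less
    show ?case
    proof (cases i rule: nat_even_odd_cases; cases j rule: nat_even_odd_cases)
      fix n m assume "i = 2 * n" "j = 2 * m"
      then show ?thesis
        using less atm_even[of n] atm_even[of m] by (cases "n + m = 0") auto
    next
      fix n m assume ij: "i = Suc (2 * n)" "j = Suc (2 * m)"
      then have "\<not> atm (Suc (2 * n)) < atm (Suc (2 * m))" "\<not> atm (Suc (2 * m)) < atm (Suc (2 * n))"
        using less(2) by auto
      then show ?thesis
        unfolding atm_odd_less_iff using less ij tm_eq_0_or_1[of n] tm_eq_0_or_1[of m] by auto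
    qed (use less(2) atm_even_bounds atm_odd_bounds tm_eq_0_or_1 in \<open>metis not_le less_le_trans\<close>)+
  qed
  then show ?thesis by (rule injI)
qed

lemma atm_mixed_less_iff_lex:
  "atm (2 * n) < atm (Suc (2 * m)) \<longleftrightarrow> lex_less (shift (2 * n) tm) (shift (Suc (2 * m)) tm)"
  "atm (Suc (2 * m)) < atm (2 * n) \<longleftrightarrow> lex_less (shift (Suc (2 * m)) tm) (shift (2 * n) tm)"
proof -
  have x: "\<And>k. shift n tm k \<le> 1" and y: "\<And>k. shift m tm k \<le> 1"
    by (rule shift_tm_le_1)+
  have "atm (2 * n) < atm (Suc (2 * m)) \<and> lex_less (shift (2 * n) tm) (shift (Suc (2 * m)) tm)
    \<or> atm (Suc (2 * m)) < atm (2 * n) \<and> lex_less (shift (Suc (2 * m)) tm) (shift (2 * n) tm)"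
  proof (cases "tm m = 0")
    case True
    then have "lex_less (tm_morphism (shift n tm)) (shift 1 (tm_morphism (shift m tm)))"
      using tm_no_triple[of m] by (intro tm_morphism_lex_less_shift_1 x) (force simp: shift_def)+
    then show ?thesis
      using True atm_even_bounds[of n] atm_odd_bounds(1)[of m]
      by (simp add: shift_even_tm shift_odd_tm)
  next
    case False
    then have "tm m = 1" using tm_eq_0_or_1[of m] by simp
    then have "lex_less (shift 1 (tm_morphism (shift m tm))) (tm_morphism (shift n tm))"
      using tm_no_triple[of m] tm_eq_0_or_1[of "m + 1"] tm_eq_0_or_1[of "m + 2"]
      by (intro shift_1_tm_morphism_lex_less x y) (auto simp: shift_def)
    then show ?thesis
      using \<open>tm m = 1\<close> atm_even_bounds[of n] atm_odd_bounds(2)[of m]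
      by (simp add: shift_even_tm shift_odd_tm)
  qed
  then show "atm (2 * n) < atm (Suc (2 * m)) \<longleftrightarrow> lex_less (shift (2 * n) tm) (shift (Suc (2 * m)) tm)"
    "atm (Suc (2 * m)) < atm (2 * n) \<longleftrightarrow> lex_less (shift (Suc (2 * m)) tm) (shift (2 * n) tm)"
    using lex_less_asym by auto
qed

theorem atm_less_iff_lex: "atm i < atm j \<longleftrightarrow> lex_less (shift i tm) (shift j tm)"
proof (induction "i + j" arbitrary: i j rule: less_induct)
  case less
  show ?case
  proof (cases "i = j")
    case True
    then show ?thesis by (simp add: lex_less_irrefl)
  next
    case False
    show ?thesis
    proof (cases i rule: nat_even_odd_cases; cases j rule: nat_even_odd_cases)
      fix n m assume ij: "i = 2 * n" "j = 2 * m"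
      then have "n + m < i + j" using False by auto
      then have "atm n < atm m \<longleftrightarrow> lex_less (shift n tm) (shift m tm)"
        using less by simp
      then show ?thesis
        using ij by (simp add: atm_even_less_iff shift_even_tm lex_less_tm_morphism[OF shift_tm_le_1 shift_tm_le_1])
    next
      fix n m assume ij: "i = Suc (2 * n)" "j = Suc (2 * m)"
      then have "atm n < atm m \<longleftrightarrow> lex_less (shift n tm) (shift m tm)"
        using less by simp
      moreover have "lex_less (shift i tm) (shift j tm) \<longleftrightarrow>
          tm m < tm n \<or> (tm n = tm m \<and> lex_less (shift n tm) (shift m tm))"
        unfolding ij shift_odd_tm lex_less_shift_1_tm_morphism[OF shift_tm_le_1 shift_tm_le_1]
        by simp
      ultimately show ?thesis
        using ij by (simp add: atm_odd_less_iff)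
    qed (simp_all add: atm_mixed_less_iff_lex)
  qed
qed

lemma represents_valid_perm_tm_atm: "represents_valid_perm tm atm"
  by (simp add: represents_valid_perm_def inj_atm atm_less_iff_lex)

lemma represents_valid_perm_comp:
  assumes "represents_valid_perm u a" "strict_mono f"
  shows "represents_valid_perm (f \<circ> u) a"
  using assms by (simp add: represents_valid_perm_def shift_comp lex_less_comp_strict_mono)

lemma represents_valid_perm_prepend:
  assumes u: "represents_valid_perm u a"
    and "\<And>k. c \<noteq> u k" "\<And>k. x \<noteq> a k" "\<And>k. c < u k \<longleftrightarrow> x < a k"
  shows "represents_valid_perm (prepend c u) (prepend x a)"
  unfolding represents_valid_perm_def
proof (intro conjI allI)
  show "inj (prepend x a)"
    using u assms(3) by (intro inj_prepend) (auto simp: represents_valid_perm_def)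
  have head: "lex_less (prepend c u) (shift l u) \<longleftrightarrow> x < a l"
    "lex_less (shift l u) (prepend c u) \<longleftrightarrow> a l < x" for l
    using assms(2-4)[of l] lex_less_head[of "prepend c u" "shift l u"]
      lex_less_head[of "shift l u" "prepend c u"] by auto
  fix i j
  show "prepend x a i < prepend x a j \<longleftrightarrow> lex_less (shift i (prepend c u)) (shift j (prepend c u))"
    using u head by (cases i; cases j) (simp_all add: represents_valid_perm_def lex_less_irrefl)
qed

section \<open>Canonical sequences\<close>

definition count_below :: "(nat \<Rightarrow> real) \<Rightarrow> real \<Rightarrow> nat \<Rightarrow> nat \<Rightarrow> nat" where
  "count_below a t x y = card {i \<in> {x..<y}. a i < t}"

lemma count_below_add:
  assumes "x \<le> y" "y \<le> z"
  shows "count_below a t x z = count_below a t x y + count_below a t y z"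
proof -
  have "{i \<in> {x..<z}. a i < t} = {i \<in> {x..<y}. a i < t} \<union> {i \<in> {y..<z}. a i < t}"
    using assms by auto
  moreover have "card ({i \<in> {x..<y}. a i < t} \<union> {i \<in> {y..<z}. a i < t}) =
      card {i \<in> {x..<y}. a i < t} + card {i \<in> {y..<z}. a i < t}"
    by (rule card_Un_disjoint) auto
  ultimately show ?thesis
    unfolding count_below_def by simp
qed

lemma count_below_le: "count_below a t x y \<le> y - x"
proof -
  have "card {i \<in> {x..<y}. a i < t} \<le> card {x..<y}" by (rule card_mono) auto
  then show ?thesis by (simp add: count_below_def)
qed

lemma card_window_eq_count_below: "card {k. k < n \<and> a (j + k) < t} = count_below a t j (j + n)"
proof -
  have "{i \<in> {j..<j + n}. a i < t} = (\<lambda>k. j + k) ` {k. k < n \<and> a (j + k) < t}"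
  proof (intro set_eqI iffI)
    fix i assume "i \<in> {i \<in> {j..<j + n}. a i < t}"
    then show "i \<in> (\<lambda>k. j + k) ` {k. k < n \<and> a (j + k) < t}"
      by (intro image_eqI[of _ _ "i - j"]) auto
  qed auto
  then show ?thesis
    unfolding count_below_def by (simp add: card_image)
qed

lemma count_below_blocks:
  assumes "\<And>q. \<bar>real (count_below a t (N * q) (N * q + N)) - N * t\<bar> \<le> C"
  shows "\<bar>real (count_below a t (N * q) (N * (q + l))) - l * N * t\<bar> \<le> l * C"
proof (induction l)
  case 0
  then show ?case by (simp add: count_below_def)
next
  case (Suc l)
  have "N * (q + Suc l) = N * (q + l) + N" by simp
  then have "count_below a t (N * q) (N * (q + Suc l)) =
      count_below a t (N * q) (N * (q + l)) + count_below a t (N * (q + l)) (N * (q + l) + N)"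
    by (metis count_below_add le_add1 mult_le_mono2)
  then show ?case
    using Suc assms[of "q + l"] by (simp add: algebra_simps)
qed

lemma count_below_window:
  assumes N: "N > 0"
    and blocks: "\<And>q. \<bar>real (count_below a t (N * q) (N * q + N)) - N * t\<bar> \<le> C"
    and t: "0 \<le> t" "t \<le> 1" and "x \<le> y"
  shows "\<bar>real (count_below a t x y) - (real y - real x) * t\<bar> \<le> C * (real y - real x) / N + C + 2 * N"
proof -
  define p q where "p = x div N" and "q = y div N"
  have x: "N * p \<le> x" "x < N * p + N" and y: "N * q \<le> y" "y < N * q + N"
    unfolding p_def q_def using mult_div_mod_eq[of N x] mult_div_mod_eq[of N y]
      mod_less_divisor[OF N, of x] mod_less_divisor[OF N, of y] by linarith+
  have "p \<le> q" unfolding p_def q_def using \<open>x \<le> y\<close> by (simp add: div_le_mono)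
  define L where "L = real (q - p)"
  have "count_below a t (N * p) y = count_below a t (N * p) x + count_below a t x y"
    using x \<open>x \<le> y\<close> by (intro count_below_add) simp_all
  moreover have "count_below a t (N * p) y = count_below a t (N * p) (N * q) + count_below a t (N * q) y"
    using y \<open>p \<le> q\<close> by (intro count_below_add) simp_all
  moreover have "count_below a t (N * p) x < N" "count_below a t (N * q) y < N"
    using count_below_le[of a t "N * p" x] count_below_le[of a t "N * q" y] x y by linarith+
  moreover have "\<bar>real (count_below a t (N * p) (N * q)) - L * N * t\<bar> \<le> L * C"
    using count_below_blocks[OF blocks, of p "q - p"] \<open>p \<le> q\<close> by (simp add: L_def)
  moreover have LN: "\<bar>L * N - (real y - real x)\<bar> \<le> N"
    using x y \<open>p \<le> q\<close> by (simp add: L_def of_nat_diff algebra_simps flip: of_nat_mult)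
  moreover have "\<bar>L * N * t - (real y - real x) * t\<bar> \<le> N"
  proof -
    have "\<bar>L * N - (real y - real x)\<bar> * t \<le> \<bar>L * N - (real y - real x)\<bar>"
      using t by (simp add: mult_left_le)
    then show ?thesis
      using t LN by (simp add: abs_mult left_diff_distrib[symmetric])
  qed
  moreover have "L * C \<le> C * (real y - real x) / N + C"
  proof -
    have "L \<le> (real y - real x) / N + 1"
      using LN N by (simp add: field_simps abs_le_iff)
    moreover have "0 \<le> C"
      using blocks[of 0] by linarith
    ultimately have "L * C \<le> ((real y - real x) / N + 1) * C"
      by (rule mult_right_mono)
    then show ?thesis
      by (simp add: algebra_simps)
  qed
  ultimately show ?thesis
    unfolding abs_le_iff by linarith
qed

lemma canonicalI_block_discrepancy:
  assumes "inj a" "\<And>i. 0 \<le> a i \<and> a i \<le> 1"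
    and blocks: "\<And>t M. 0 \<le> t \<Longrightarrow> t \<le> 1 \<Longrightarrow> \<exists>N\<ge>M. N > 0 \<and>
      (\<forall>q. \<bar>real (count_below a t (N * q) (N * q + N)) - N * t\<bar> \<le> C)"
  shows "canonical a"
  unfolding canonical_def
proof (intro conjI ballI allI impI)
  fix t \<epsilon> :: real assume "t \<in> {0..1}" "\<epsilon> > 0"
  then have t: "0 \<le> t" "t \<le> 1" and \<epsilon>: "\<epsilon> > 0" by auto
  obtain N where N: "N \<ge> nat \<lceil>2 * C / \<epsilon>\<rceil> + 1" "N > 0"
    and block: "\<And>q. \<bar>real (count_below a t (N * q) (N * q + N)) - N * t\<bar> \<le> C"
    using blocks[OF t] by blast
  have "2 * C / \<epsilon> < N"
    using N(1) by linarith
  then have CN: "C / N < \<epsilon> / 2"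
    using \<epsilon> N(2) by (simp add: field_simps)
  define n0 where "n0 = nat \<lceil>2 * (C + 2 * N) / \<epsilon>\<rceil> + 1"
  show "\<exists>n0. \<forall>n\<ge>n0. \<forall>j. \<bar>real (card {k. k < n \<and> a (j + k) < t}) / real n - t\<bar> < \<epsilon>"
  proof (intro exI allI impI)
    fix n j assume "n0 \<le> n"
    then have "2 * (C + 2 * N) / \<epsilon> < n" "n > 0"
      unfolding n0_def by linarith+
    then have Cn: "(C + 2 * N) / n < \<epsilon> / 2"
      using \<epsilon> by (simp add: field_simps)
    have "\<bar>real (count_below a t j (j + n)) / n - t\<bar> = \<bar>real (count_below a t j (j + n)) - n * t\<bar> / n"
    proof -
      have "real (count_below a t j (j + n)) / n - t = (real (count_below a t j (j + n)) - n * t) / n"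
        using \<open>n > 0\<close> by (simp add: field_simps)
      then show ?thesis by (simp add: abs_divide)
    qed
    also have "\<dots> \<le> (C * n / N + C + 2 * N) / n"
      using count_below_window[OF N(2) block t, of j "j + n"] by (simp add: divide_right_mono)
    also have "\<dots> = C / N + (C + 2 * N) / n"
      using \<open>n > 0\<close> by (simp add: field_simps)
    finally show "\<bar>real (card {k. k < n \<and> a (j + k) < t}) / real n - t\<bar> < \<epsilon>"
      unfolding card_window_eq_count_below using CN Cn by linarith
  qed
qed (use assms in auto)

lemma card_window_prepend_0:
  fixes a :: "nat \<Rightarrow> real"
  shows "\<bar>real (card {k. k < n \<and> prepend x a k < t}) - real (card {k. k < n \<and> a k < t})\<bar> \<le> 1"
proof (cases n)
  case 0
  then show ?thesis by simp
next
  case (Suc m)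
  have "count_below (prepend x a) t 1 (1 + m) = count_below a t 0 (0 + m)"
    unfolding card_window_eq_count_below[symmetric] by simp
  then have "count_below (prepend x a) t 0 n = count_below (prepend x a) t 0 1 + count_below a t 0 m"
    using count_below_add[of 0 1 n "prepend x a" t] Suc by simp
  moreover have "count_below a t 0 n = count_below a t 0 m + count_below a t m n"
    using count_below_add[of 0 m n a t] Suc by simp
  moreover have "count_below (prepend x a) t 0 1 \<le> 1" "count_below a t m n \<le> 1"
    using count_below_le[of "prepend x a" t 0 1] count_below_le[of a t m n] Suc by simp_all
  ultimately show ?thesis
    using card_window_eq_count_below[of n _ 0 t] by simp
qed

lemma canonical_prepend:
  assumes a: "canonical a" and x: "0 \<le> x" "x \<le> 1" "x \<notin> range a"
  shows "canonical (prepend x a)"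
  unfolding canonical_def
proof (intro conjI ballI allI impI)
  show "inj (prepend x a)"
    using a x(3) by (intro inj_prepend) (simp add: canonical_def)
  show "0 \<le> prepend x a i" "prepend x a i \<le> 1" for i
    using a x by (cases i; simp add: canonical_def)+
  fix t \<epsilon> :: real assume t: "t \<in> {0..1}" and \<epsilon>: "\<epsilon> > 0"
  obtain N where N: "\<And>n j. n \<ge> N \<Longrightarrow>
      \<bar>real (card {k. k < n \<and> a (j + k) < t}) / real n - t\<bar> < \<epsilon> / 2"
  proof -
    have "\<epsilon> / 2 > 0" using \<epsilon> by simp
    then show ?thesis using a t that unfolding canonical_def by blast
  qed
  show "\<exists>n0. \<forall>n\<ge>n0. \<forall>j. \<bar>real (card {k. k < n \<and> prepend x a (j + k) < t}) / real n - t\<bar> < \<epsilon>"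
  proof (intro exI allI impI)
    fix n j assume n: "max N (nat \<lceil>2 / \<epsilon>\<rceil> + 1) \<le> n"
    then have "2 / \<epsilon> < n" "n > 0"
      by linarith+
    then have "1 / n < \<epsilon> / 2"
      using \<epsilon> by (simp add: field_simps)
    show "\<bar>real (card {k. k < n \<and> prepend x a (j + k) < t}) / real n - t\<bar> < \<epsilon>"
    proof (cases j)
      case 0
      have "\<bar>real (card {k. k < n \<and> prepend x a k < t}) / n
          - real (card {k. k < n \<and> a k < t}) / n\<bar> \<le> 1 / n"
        using card_window_prepend_0[of n x a t] \<open>n > 0\<close>
        by (simp add: diff_divide_distrib[symmetric] abs_divide divide_right_mono)
      then show ?thesis
        using N[of n 0, unfolded add_0] n \<open>1 / n < \<epsilon> / 2\<close> unfolding 0 add_0 abs_less_iff abs_le_iff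
        by linarith
    next
      case (Suc j')
      then have "{k. k < n \<and> prepend x a (j + k) < t} = {k. k < n \<and> a (j' + k) < t}"
        by simp
      then show ?thesis
        using N[of n j'] n \<epsilon> by simp
    qed
  qed
qed

lemma canonical_infinite_above:
  assumes a: "canonical a" and s: "0 \<le> s" "s < 1"
  shows "infinite {k. s \<le> a k}"
proof
  assume fin: "finite {k. s \<le> a k}"
  define c where "c = card {k. s \<le> a k}"
  obtain N where N: "\<And>n. n \<ge> N \<Longrightarrow>
      \<bar>real (card {k. k < n \<and> a (0 + k) < s}) / real n - s\<bar> < (1 - s) / 2"
  proof -
    have "s \<in> {0..1}" "(1 - s) / 2 > 0" using s by auto
    then show ?thesis using a that unfolding canonical_def by blast
  qed
  define n where "n = max N (nat \<lceil>2 * c / (1 - s)\<rceil> + 1)"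
  have "2 * c / (1 - s) < n" "n > 0" "n \<ge> N"
    unfolding n_def by linarith+
  then have cn: "c / n < (1 - s) / 2"
    using s by (simp add: field_simps)
  have "n - c \<le> card ({..<n} - {k. s \<le> a k})"
    using diff_card_le_card_Diff[OF fin, of "{..<n}"] by (simp add: c_def)
  also have "\<dots> \<le> card {k. k < n \<and> a (0 + k) < s}"
    by (rule card_mono) auto
  finally have "real n - c \<le> card {k. k < n \<and> a (0 + k) < s}"
    by linarith
  then have "(real n - c) / n \<le> real (card {k. k < n \<and> a (0 + k) < s}) / n"
    by (rule divide_right_mono) simp
  moreover have "(real n - c) / n = 1 - c / n"
    using \<open>n > 0\<close> by (simp add: field_simps)
  ultimately have "1 - c / n \<le> real (card {k. k < n \<and> a (0 + k) < s}) / n"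
    by simp
  then show False
    using N[OF \<open>n \<ge> N\<close>] cn unfolding abs_less_iff by argo
qed

section \<open>Equidistribution of a_tm\<close>

lemma card_grid_below:
  fixes N :: nat and s t :: real
  assumes N: "N > 0" and s: "0 < s" "s \<le> 1 / N" and t: "0 \<le> t" "t \<le> 1"
  shows "\<bar>real (card {k. k < N \<and> s + k / N < t}) - N * t\<bar> \<le> 1"
proof -
  define c where "c = N * (t - s)"
  have below_iff: "s + k / N < t \<longleftrightarrow> k < nat \<lceil>c\<rceil>" for k :: nat
  proof -
    have "s + k / N < t \<longleftrightarrow> real k < c"
      using N by (simp add: c_def field_simps)
    then show ?thesis
      by (simp add: zless_nat_eq_int_zless less_ceiling_iff)
  qed
  then have "{k. k < N \<and> s + k / N < t} = {..< min N (nat \<lceil>c\<rceil>)}"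
    by (simp only: set_eq_iff mem_Collect_eq lessThan_iff min_less_iff_conj below_iff simp_thms)
  then have card: "card {k. k < N \<and> s + k / N < t} = min N (nat \<lceil>c\<rceil>)"
    by simp
  have c: "N * t - 1 \<le> c" "c < N * t"
    using N s by (simp_all add: c_def field_simps)
  have ceil: "c \<le> \<lceil>c\<rceil>" "\<lceil>c\<rceil> < c + 1"
    using ceiling_correct[of c] by linarith+
  have "N * t \<le> N"
    using N t by simp
  show ?thesis
  proof (cases "c \<le> 0")
    case True
    then have "nat \<lceil>c\<rceil> = 0" by simp
    then show ?thesis
      unfolding card using c t N by simp
  next
    case False
    then have nat_c: "real (nat \<lceil>c\<rceil>) = of_int \<lceil>c\<rceil>" by simp
    have "N * t - 1 \<le> min (real N) (of_int \<lceil>c\<rceil>)"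
      unfolding min.bounded_iff using c ceil \<open>N * t \<le> N\<close> by linarith
    moreover have "min (real N) (of_int \<lceil>c\<rceil>) \<le> N * t + 1"
      using min.cobounded2[of "real N" "of_int \<lceil>c\<rceil>"] c ceil by linarith
    ultimately show ?thesis
      unfolding card of_nat_min nat_c abs_le_iff by linarith
  qed
qed

lemma atm_children_on_grid:
  fixes h k n e m :: nat
  assumes h: "h > 0" and s: "0 < s" "s \<le> 1 / (2 * h)"
    and k: "k < 2 * h" "atm n = s + k / (2 * h)" and "e < 2" and m: "m = 2 * n + e"
  shows "\<exists>k' < 4 * h. atm m = s / 2 + k' / (4 * h)"
proof -
  have hpos: "real h > 0" using h by simp
  consider "e = 0" | "e = 1" "atm n \<le> 1/2" | "e = 1" "\<not> atm n \<le> 1/2"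
    using \<open>e < 2\<close> by linarith
  then show ?thesis
  proof cases
    case 1
    have "atm m = atm n / 2 + 1/4"
      using 1 m by (simp add: atm_even)
    also have "\<dots> = s / 2 + real (k + h) / (4 * h)"
      unfolding k(2) using hpos by (simp add: field_simps)
    finally show ?thesis using k(1) by (intro exI[of _ "k + h"] conjI) simp_all
  next
    case 2
    then have "k / (2 * h) < 1/2"
      using s k(2) by linarith
    then have "k < h"
      using hpos by (simp add: field_simps)
    have "atm m = atm n / 2 + 3/4"
      using 2 m by (simp add: atm_odd)
    also have "\<dots> = s / 2 + real (k + 3 * h) / (4 * h)"
      unfolding k(2) using hpos by (simp add: field_simps)
    finally show ?thesis using \<open>k < h\<close> by (intro exI[of _ "k + 3 * h"] conjI) simp_all
  next
    case 3
    then have "1/2 < (k + 1) / (2 * h)"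
      using s k(2) by (simp add: add_divide_distrib)
    then have "h < k + 1"
      using hpos by (simp add: field_simps)
    then have "h \<le> k" by linarith
    have "atm m = atm n / 2 - 1/4"
      using 3 m by (simp add: atm_odd)
    also have "\<dots> = s / 2 + real (k - h) / (4 * h)"
      unfolding k(2) using hpos \<open>h \<le> k\<close> by (simp add: field_simps)
    finally show ?thesis using k(1) by (intro exI[of _ "k - h"] conjI) simp_all
  qed
qed

lemma atm_block_grid:
  fixes N :: nat
  assumes "N = 2 * 2 ^ m"
  shows "\<exists>s. 0 < s \<and> s \<le> 1 / N \<and> (\<forall>r < N. \<exists>k < N. atm (N * q + r) = s + k / N)"
  using assms
proof (induction m arbitrary: N)
  case 0
  then have N: "N = 2" by simp
  show ?case
  proof (cases "atm q \<le> 1/2")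
    case True
    then have "atm (2 * q + 0) = (atm q / 2 + 1/4) + 0 / 2" "atm (2 * q + 1) = (atm q / 2 + 1/4) + 1 / 2"
      by (simp_all add: atm_even atm_odd)
    then show ?thesis
      using atm_bounds[of q] True unfolding N
      by (intro exI[of _ "atm q / 2 + 1/4"]) (auto simp: less_2_cases_iff)
  next
    case False
    then have "atm (2 * q + 0) = (atm q / 2 - 1/4) + 1 / 2" "atm (2 * q + 1) = (atm q / 2 - 1/4) + 0 / 2"
      by (simp_all add: atm_even atm_odd)
    then show ?thesis
      using atm_bounds[of q] False unfolding N
      by (intro exI[of _ "atm q / 2 - 1/4"]) (auto simp: less_2_cases_iff)
  qed
next
  case (Suc m)
  define h :: nat where "h = 2 ^ m"
  have "h > 0" "N = 4 * h" "2 * h = 2 * 2 ^ m"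
    using Suc(2) by (simp_all add: h_def)
  obtain s where s: "0 < s" "s \<le> 1 / (2 * h)"
    and grid: "\<forall>r < 2 * h. \<exists>k < 2 * h. atm (2 * h * q + r) = s + k / (2 * h)"
    using Suc(1)[OF \<open>2 * h = 2 * 2 ^ m\<close>] by blast
  have grid': "\<exists>k < 4 * h. atm (4 * h * q + r) = s / 2 + k / (4 * h)" if "r < 4 * h" for r
  proof -
    have r: "4 * h * q + r = 2 * (2 * h * q + r div 2) + r mod 2" "r div 2 < 2 * h" "r mod 2 < 2"
      using that by simp_all
    then obtain k where "k < 2 * h" "atm (2 * h * q + r div 2) = s + k / (2 * h)"
      using grid by blast
    then show ?thesis
      by (rule atm_children_on_grid[OF \<open>h > 0\<close> s _ _ r(3,1)])
  qed
  show ?case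
    unfolding \<open>N = 4 * h\<close>
  proof (intro exI[of _ "s / 2"] conjI allI impI)
    show "0 < s / 2" "s / 2 \<le> 1 / (4 * h)"
      using s by simp_all
  qed (rule grid')
qed

lemma atm_block_discrepancy:
  assumes N: "N = 2 * 2 ^ m" and t: "0 \<le> t" "t \<le> 1"
  shows "\<bar>real (count_below atm t (N * q) (N * q + N)) - N * t\<bar> \<le> 1"
proof -
  obtain s where s: "0 < s" "s \<le> 1 / N" and grid: "\<forall>r < N. \<exists>k < N. atm (N * q + r) = s + k / N"
    using atm_block_grid[OF N, of q] by blast
  define f where "f = (\<lambda>r. atm (N * q + r))"
  define g where "g = (\<lambda>k :: nat. s + k / N)"
  have "N > 0" using N by simp
  have inj_f: "inj_on f {..<N}"
    by (rule inj_onI) (simp add: f_def inj_eq[OF inj_atm])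
  have inj_g: "inj_on g {..<N}"
    by (rule inj_onI) (use \<open>N > 0\<close> in \<open>simp add: g_def\<close>)
  have "f ` {..<N} \<subseteq> g ` {..<N}"
    using grid by (auto simp: f_def g_def)
  moreover have "card (f ` {..<N}) = card (g ` {..<N})"
    using card_image[OF inj_f] card_image[OF inj_g] by simp
  ultimately have fg: "f ` {..<N} = g ` {..<N}"
    by (intro card_subset_eq) simp_all
  have "count_below atm t (N * q) (N * q + N) = card {r. r < N \<and> f r < t}"
    by (simp add: card_window_eq_count_below f_def)
  also have "\<dots> = card (f ` {r. r < N \<and> f r < t})"
    by (rule card_image[symmetric], rule inj_on_subset[OF inj_f]) auto
  also have "f ` {r. r < N \<and> f r < t} = {v \<in> f ` {..<N}. v < t}"
    by auto
  also have "\<dots> = g ` {k. k < N \<and> g k < t}"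
    unfolding fg by auto
  also have "card \<dots> = card {k. k < N \<and> s + k / N < t}"
    by (subst card_image, rule inj_on_subset[OF inj_g]) (auto simp: g_def)
  finally show ?thesis
    using card_grid_below[OF \<open>N > 0\<close> s t] by simp
qed

lemma canonical_atm: "canonical atm"
proof (rule canonicalI_block_discrepancy)
  show "\<exists>N\<ge>M. N > 0 \<and> (\<forall>q. \<bar>real (count_below atm t (N * q) (N * q + N)) - N * t\<bar> \<le> 1)"
    if "0 \<le> t" "t \<le> 1" for t M
  proof -
    have "M \<le> 2 * 2 ^ M" using less_exp[of M] by linarith
    then show ?thesis
      using atm_block_discrepancy[OF refl that, of M] by (intro exI[of _ "2 * 2 ^ M"]) auto
  qed
qed (use inj_atm atm_bounds less_imp_le in auto)

lemma not_ergodic_valid_perm_prepend_2_tm: "\<not> ergodic_valid_perm (prepend 2 tm)"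
proof
  assume "ergodic_valid_perm (prepend 2 tm)"
  then obtain a where a: "canonical a" "represents_valid_perm (prepend 2 tm) a"
    by (auto simp: ergodic_valid_perm_def)
  have "2 \<noteq> tm k" "\<not> 2 < tm k" "2 \<noteq> atm k" "\<not> 2 < atm k" for k
    using tm_le_1[of k] atm_bounds[of k] by simp_all
  then have "represents_valid_perm (prepend 2 tm) (prepend 2 atm)"
    by (intro represents_valid_perm_prepend[OF represents_valid_perm_tm_atm]) simp_all
  then have same_order: "a i < a j \<longleftrightarrow> prepend 2 atm i < prepend 2 atm j" for i j
    using a(2) by (simp add: represents_valid_perm_def)
  have "a k < a 2" if k: "k \<notin> {0, 2}" for k
  proof -
    obtain l where l: "k = Suc l" "l \<noteq> 1"
      by (cases k) (use k in auto)
    then have "atm l \<noteq> 1"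
      using atm_1 inj_eq[OF inj_atm, of l 1] by simp
    then have "atm l < atm 1"
      using atm_bounds[of l] atm_1 by (simp add: less_le)
    then show ?thesis
      using l by (simp add: same_order numeral_2_eq_2 atm_1)
  qed
  then have "{k. a 2 \<le> a k} \<subseteq> {0, 2}"
    by (auto simp: not_less[symmetric])
  moreover have "a 2 < a 0"
    using atm_1 by (simp add: same_order numeral_2_eq_2)
  moreover have "0 \<le> a 2" "a 0 \<le> 1"
    using a(1) by (simp_all add: canonical_def)
  ultimately show False
    using canonical_infinite_above[OF a(1), of "a 2"] finite_subset[of _ "{0, 2 :: nat}"] by simp
qed

theorem mainTheorem8:
  shows "(let w1 = (\<lambda>n. if n = 0 then 0 else tm (n - 1) + 1);
              b = (\<lambda>n. if n = 0 then 0 else atm (n - 1))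
          in ergodic_valid_perm w1 \<and> canonical b \<and> represents_valid_perm w1 b)
       \<and> \<not> ergodic_valid_perm (\<lambda>n. if n = 0 then 2 else tm (n - 1))"
proof -
  have w1: "(\<lambda>n. if n = 0 then 0 else tm (n - 1) + 1) = prepend 0 (Suc \<circ> tm)"
    and b: "(\<lambda>n. if n = 0 then 0 else atm (n - 1)) = prepend 0 atm"
    and v: "(\<lambda>n. if n = 0 then 2 else tm (n - 1)) = prepend 2 tm"
    by (simp_all add: prepend_def fun_eq_iff)
  have atm_pos: "0 < atm k" for k
    using atm_bounds[of k] by simp
  then have "0 \<notin> range atm"
    by (metis less_irrefl rangeE)
  then have "canonical (prepend 0 atm)"
    by (intro canonical_prepend[OF canonical_atm]) simp_all
  moreover have "strict_mono Suc"
    by (rule strict_monoI) simp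
  then have "represents_valid_perm (prepend 0 (Suc \<circ> tm)) (prepend 0 atm)"
    using represents_valid_perm_comp[OF represents_valid_perm_tm_atm] atm_pos
    by (intro represents_valid_perm_prepend) (auto simp: less_imp_neq)
  ultimately show ?thesis
    unfolding w1 b v Let_def ergodic_valid_perm_def using not_ergodic_valid_perm_prepend_2_tm
    by (auto simp: ergodic_valid_perm_def)
qed

end
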